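(* Let $\mathcal{H}$ be a complex Hilbert space of finite dimension $d\geq 1$, let $N_d = 3^d\cdot \mathrm{lcm}\{3^1-2^1,3^2-2^2,\ldots,3^d-2^d\}$, and let $U,V$ be unitary operators on $\mathcal{H}$ with $V^{-1}U^2V=U^3$. Then for every $\lambda\in\mathbb{R}$ such that $e^{2\pi i\lambda}$ is an eigenvalue of $U$, one has $N_d\lambda\in\mathbb{Z}$. Consequently, if $e^{2\pi i\lambda}$ is an eigenvalue of $U$, then $-e^{2\pi i\lambda}$ is not an eigenvalue of $U$, and every eigenvector of $U^2$ is an eigenvector of $U$. *)

theory Defs
  imports "Jordan_Normal_Form.Schur_Decomposition" "Jordan_Normal_Form.Char_Poly"
begin

definition unitary_mat :: "nat \<Rightarrow> complex mat \<Rightarrow> bool" where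
  "unitary_mat d U \<longleftrightarrow> U \<in> carrier_mat d d \<and>
     U * mat_adjoint U = 1\<^sub>m d \<and> mat_adjoint U * U = 1\<^sub>m d"

definition N_const :: "nat \<Rightarrow> nat" where
  "N_const d = 3 ^ d * Lcm {3 ^ k - 2 ^ k | k. k \<in> {1..d}}"

end

theory Submission
  imports Defs "Jordan_Normal_Form.Spectral_Radius"
begin

(* If U v = \<mu> v, then U^3 has eigenvalue \<mu>^3; since U^3 = V^{-1} U^2 V is
   similar to U^2, the number \<mu>^3 is an eigenvalue of U^2, hence \<mu>^3 = \<nu>^2 for some
   eigenvalue \<nu> of U.  Iterating gives a sequence g 0 = \<mu>, g (j+1)^2 = g j^3 in the
   spectrum of U, which has at most d elements; so g a = g (a + p) with a \<le> d and
   1 \<le> p \<le> d.  Then g a^(3^p) = g (a+p)^(2^p) forces g a^(3^p - 2^p) = 1 (as g a \<noteq> 0, U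
   being invertible), and \<mu>^(3^a) = g a^(2^a) yields \<mu>^(3^a (3^p - 2^p)) = 1, whence
   \<mu>^N = 1 for N = N_const d.  For \<mu> = exp (2 \<pi> i t) this says N t \<in> \<int>.  Since N is odd,
   \<mu> and -\<mu> cannot both be N-th roots of unity.  Finally, an eigenvector of U^2 that is
   not an eigenvector of U forces both square roots of its eigenvalue to be
   eigenvalues of U, which is excluded by the previous statement. *)

section \<open>Eigenvalues of a square and of a similar matrix\<close>

lemma square_root_shift_eigen:
  fixes A :: "'a :: field mat"
  assumes A: "A \<in> carrier_mat n n" and v: "v \<in> carrier_vec n"
    and AAv: "A *\<^sub>v (A *\<^sub>v v) = (s * s) \<cdot>\<^sub>v v"
  shows "A *\<^sub>v (A *\<^sub>v v + s \<cdot>\<^sub>v v) = s \<cdot>\<^sub>v (A *\<^sub>v v + s \<cdot>\<^sub>v v)"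
proof -
  have "A *\<^sub>v (A *\<^sub>v v + s \<cdot>\<^sub>v v) = A *\<^sub>v (A *\<^sub>v v) + s \<cdot>\<^sub>v (A *\<^sub>v v)"
    using A v by (simp add: mult_add_distrib_mat_vec mult_mat_vec)
  then show ?thesis
    using A v by (intro eq_vecI) (auto simp: AAv algebra_simps)
qed

lemma eigenvector_of_square:
  fixes A :: "complex mat"
  assumes A: "A \<in> carrier_mat n n" and ev: "eigenvector (A * A) v c"
  shows "(\<exists>\<kappa>. eigenvector A v \<kappa> \<and> \<kappa>^2 = c)
       \<or> (eigenvalue A (csqrt c) \<and> eigenvalue A (- csqrt c))"
proof -
  have v: "v \<in> carrier_vec n" "v \<noteq> 0\<^sub>v n" and AAv: "A *\<^sub>v (A *\<^sub>v v) = c \<cdot>\<^sub>v v"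
    using ev A unfolding eigenvector_def by (auto simp flip: assoc_mult_mat_vec)
  have root: "eigenvalue A r \<or> (\<exists>\<kappa>. eigenvector A v \<kappa> \<and> \<kappa>^2 = c)" if r: "r * r = c" for r
  proof (cases "A *\<^sub>v v + r \<cdot>\<^sub>v v = 0\<^sub>v n")
    case True
    have "A *\<^sub>v v = (- r) \<cdot>\<^sub>v v"
    proof (rule eq_vecI)
      fix i assume i: "i < dim_vec ((- r) \<cdot>\<^sub>v v)"
      have "(A *\<^sub>v v + r \<cdot>\<^sub>v v) $ i = 0" using True i v by auto
      then show "(A *\<^sub>v v) $ i = ((- r) \<cdot>\<^sub>v v) $ i"
        using i v A by (auto simp: eq_neg_iff_add_eq_0)
    qed (use A v in auto)
    then have "eigenvector A v (- r) \<and> (- r)^2 = c"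
      using A v r unfolding eigenvector_def by (auto simp: power2_eq_square)
    then show ?thesis by blast
  next
    case False
    have "A *\<^sub>v (A *\<^sub>v v + r \<cdot>\<^sub>v v) = r \<cdot>\<^sub>v (A *\<^sub>v v + r \<cdot>\<^sub>v v)"
      using square_root_shift_eigen[OF A v(1)] AAv r by simp
    then have "eigenvector A (A *\<^sub>v v + r \<cdot>\<^sub>v v) r"
      using A v False unfolding eigenvector_def by auto
    then show ?thesis unfolding eigenvalue_def by blast
  qed
  have "csqrt c * csqrt c = c" "- csqrt c * - csqrt c = c"
    by (simp_all flip: power2_eq_square)
  then show ?thesis using root by blast
qed

lemma eigenvalue_square_root:
  fixes A :: "complex mat"
  assumes A: "A \<in> carrier_mat n n" and ev: "eigenvalue (A * A) c"
  shows "\<exists>\<nu>. eigenvalue A \<nu> \<and> \<nu>^2 = c"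
proof -
  obtain v where "eigenvector (A * A) v c" using ev unfolding eigenvalue_def by blast
  from eigenvector_of_square[OF A this] show ?thesis
    unfolding eigenvalue_def by (metis power2_csqrt)
qed

lemma eigenvalue_cube:
  fixes A :: "'a :: comm_ring_1 mat"
  assumes A: "A \<in> carrier_mat n n" and ev: "eigenvalue A \<mu>"
  shows "eigenvalue (A * A * A) (\<mu>^3)"
proof -
  obtain v where v: "eigenvector A v \<mu>" using ev unfolding eigenvalue_def by blast
  have "A ^\<^sub>m 3 = A * A * A" using A by (simp add: numeral_3_eq_3)
  then have "(A * A * A) *\<^sub>v v = \<mu>^3 \<cdot>\<^sub>v v" using eigenvector_pow[OF A v, of 3] by simp
  then show ?thesis using v A unfolding eigenvalue_def eigenvector_def by auto
qed

text \<open>Similar matrices have the same eigenvalues (they share the characteristic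
  polynomial).\<close>
lemma eigenvalue_similar:
  fixes B P Q :: "'a :: field mat"
  assumes B: "B \<in> carrier_mat n n" and P: "P \<in> carrier_mat n n" and Q: "Q \<in> carrier_mat n n"
    and PQ: "P * Q = 1\<^sub>m n" and QP: "Q * P = 1\<^sub>m n"
  shows "eigenvalue (P * B * Q) k \<longleftrightarrow> eigenvalue B k"
proof -
  have PBQ: "P * B * Q \<in> carrier_mat n n" using B P Q by auto
  have "char_poly (P * B * Q) = char_poly B"
    by (intro char_poly_similar similar_matI[OF _ PQ QP refl]) (use B P Q PBQ in auto)
  then show ?thesis by (simp add: eigenvalue_root_char_poly[OF B] eigenvalue_root_char_poly[OF PBQ])
qed

lemma eigenvalue_nonzero_if_left_invertible:
  fixes A B :: "'a :: comm_ring_1 mat"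
  assumes A: "A \<in> carrier_mat n n" and B: "B \<in> carrier_mat n n" and BA: "B * A = 1\<^sub>m n"
    and ev: "eigenvalue A \<mu>"
  shows "\<mu> \<noteq> 0"
proof
  assume "\<mu> = 0"
  then obtain v where v: "v \<in> carrier_vec n" "v \<noteq> 0\<^sub>v n" "A *\<^sub>v v = 0 \<cdot>\<^sub>v v"
    using ev A unfolding eigenvalue_def eigenvector_def by auto
  have Av: "A *\<^sub>v v = 0\<^sub>v n" unfolding v(3) using v(1) by (intro eq_vecI) auto
  have "v = (B * A) *\<^sub>v v" using BA v by simp
  also have "\<dots> = B *\<^sub>v (A *\<^sub>v v)" using A B v by simp
  also have "\<dots> = 0\<^sub>v n" using B Av by (intro eq_vecI) auto
  finally show False using v by simp
qed

section \<open>Orbits of \<mu> \<mapsto> \<nu> with \<nu>^2 = \<mu>^3\<close>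

lemma orbit_power_relation:
  fixes g :: "nat \<Rightarrow> 'a :: comm_monoid_mult"
  assumes step: "\<And>j. g (Suc j) ^ 2 = g j ^ 3"
  shows "g a ^ (3^p) = g (a + p) ^ (2^p)"
proof (induction p)
  case 0
  then show ?case by simp
next
  case (Suc p)
  have "g a ^ (3 ^ Suc p) = (g a ^ (3^p)) ^ 3" by (simp add: power_mult[symmetric] mult.commute)
  also have "\<dots> = (g (a + p) ^ 3) ^ (2^p)" using Suc by (simp add: power_mult[symmetric] mult.commute)
  also have "\<dots> = (g (Suc (a + p)) ^ 2) ^ (2^p)" using step by simp
  also have "\<dots> = g (a + Suc p) ^ (2 ^ Suc p)" by (simp add: power_mult[symmetric] mult.commute)
  finally show ?case .
qed

lemma orbit_repetition_root_of_unity: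
  fixes g :: "nat \<Rightarrow> 'a :: idom"
  assumes step: "\<And>j. g (Suc j) ^ 2 = g j ^ 3"
    and rep: "g a = g (a + p)" and nz: "g a \<noteq> 0"
  shows "g 0 ^ (3^a * (3^p - 2^p)) = 1"
proof -
  define q :: nat where "q = 3^p - 2^p"
  have "(2::nat)^p \<le> 3^p" by (simp add: power_mono)
  then have "g a ^ (2^p) * g a ^ q = g a ^ (3^p)" unfolding q_def by (simp flip: power_add)
  also have "\<dots> = g a ^ (2^p)" using orbit_power_relation[of g a p, OF step] rep by simp
  finally have cycle: "g a ^ q = 1" using nz by simp
  have "g 0 ^ (3^a * q) = (g a ^ (2^a)) ^ q"
    using orbit_power_relation[of g 0 a, OF step] by (simp add: power_mult)
  also have "\<dots> = (g a ^ q) ^ (2^a)" by (simp flip: power_mult add: mult.commute)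
  finally show ?thesis using cycle unfolding q_def by simp
qed

lemma sequence_repeats_early:
  fixes g :: "nat \<Rightarrow> 'a"
  assumes fin: "finite S" and card: "card S \<le> d" and range: "\<And>j. g j \<in> S"
  obtains a p where "a + p \<le> d" "1 \<le> p" "g a = g (a + p)"
proof -
  have "\<not> inj_on g {0..d}"
  proof
    assume "inj_on g {0..d}"
    then have "card (g ` {0..d}) = Suc d" by (simp add: card_image)
    moreover have "card (g ` {0..d}) \<le> card S" using range by (intro card_mono fin) auto
    ultimately show False using card by simp
  qed
  then obtain i j where ij: "i \<le> d" "j \<le> d" "i < j" "g i = g j"
    unfolding inj_on_def by (metis atLeastAtMost_iff linorder_neqE_nat)
  show thesis using that[of i "j - i"] ij by simp
qed

section \<open>Arithmetic of N_const\<close>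

text \<open>N_const d is odd: 3^d is odd, and so is each 3^k - 2^k with k \<ge> 1, hence their lcm.\<close>
lemma N_const_odd: "odd (N_const d)"
proof -
  define S :: "nat set" where "S = {3 ^ k - 2 ^ k | k. k \<in> {1..d}}"
  have fin: "finite S" unfolding S_def by auto
  have odd_elem: "odd x" if "x \<in> S" for x
  proof -
    from that obtain k :: nat where k: "k \<ge> 1" "x = 3^k - 2^k" unfolding S_def by auto
    have "(2::nat)^k \<le> 3^k" by (simp add: power_mono)
    then show ?thesis using k by (simp add: leD)
  qed
  have "Lcm S dvd \<Prod>S" using fin by (intro Lcm_least) (auto intro: dvd_prodI[where f = id, simplified])
  moreover have "odd (\<Prod>S)" using fin odd_elem by (simp add: even_prod_iff)
  ultimately have "odd (Lcm S)" using dvd_trans by blast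
  then show ?thesis unfolding N_const_def S_def by simp
qed

lemma orbit_exponent_dvd_N_const:
  assumes "a \<le> d" "1 \<le> p" "p \<le> d"
  shows "3^a * (3^p - 2^p) dvd N_const d"
proof -
  have "(3::nat)^a dvd 3^d" using assms by (simp add: le_imp_power_dvd)
  moreover have "(3::nat)^p - 2^p dvd Lcm {3 ^ k - 2 ^ k | k. k \<in> {1..d}}"
    by (rule dvd_Lcm) (use assms in auto)
  ultimately show ?thesis unfolding N_const_def by (rule mult_dvd_mono)
qed

lemma cube_square_closed_roots_of_unity:
  fixes S :: "'a :: idom set"
  assumes fin: "finite S" and card: "card S \<le> d" and nz: "0 \<notin> S"
    and closed: "\<And>\<mu>. \<mu> \<in> S \<Longrightarrow> \<exists>\<nu>\<in>S. \<nu>^2 = \<mu>^3"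
    and \<mu>: "\<mu> \<in> S"
  shows "\<mu> ^ N_const d = 1"
proof -
  define f where "f \<nu> = (SOME \<nu>'. \<nu>' \<in> S \<and> \<nu>'^2 = \<nu>^3)" for \<nu>
  have f: "f \<nu> \<in> S \<and> f \<nu> ^ 2 = \<nu>^3" if "\<nu> \<in> S" for \<nu>
    unfolding f_def using someI_ex[OF closed[OF that, unfolded Bex_def]] .
  define g where "g j = (f ^^ j) \<mu>" for j
  have g_in: "g j \<in> S" for j by (induction j) (simp_all add: g_def \<mu> f)
  have step: "g (Suc j) ^ 2 = g j ^ 3" for j using f[OF g_in[of j]] by (simp add: g_def)
  obtain a p where ap: "a + p \<le> d" "1 \<le> p" "g a = g (a + p)"
    using sequence_repeats_early[OF fin card g_in] .
  have "g 0 ^ (3^a * (3^p - 2^p)) = 1"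
    using orbit_repetition_root_of_unity[OF step ap(3)] g_in nz by metis
  moreover obtain k where "N_const d = 3^a * (3^p - 2^p) * k"
    using orbit_exponent_dvd_N_const[of a d p] ap by auto
  ultimately show ?thesis by (simp add: g_def power_mult)
qed

lemma eigenvalue_root_of_unity:
  fixes U V Vinv W :: "complex mat"
  assumes U: "U \<in> carrier_mat d d" and W: "W \<in> carrier_mat d d" and WU: "W * U = 1\<^sub>m d"
    and V: "V \<in> carrier_mat d d" and Vinv: "Vinv \<in> carrier_mat d d"
    and inv: "Vinv * V = 1\<^sub>m d" "V * Vinv = 1\<^sub>m d"
    and conj: "Vinv * (U * U) * V = U * U * U"
    and ev: "eigenvalue U \<mu>"
  shows "\<mu> ^ N_const d = 1"
proof (rule cube_square_closed_roots_of_unity)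
  show "finite (spectrum U)" "card (spectrum U) \<le> d" using card_finite_spectrum[OF U] by auto
  show "0 \<notin> spectrum U"
    using eigenvalue_nonzero_if_left_invertible[OF U W WU] unfolding spectrum_def by blast
  show "\<exists>\<nu>\<in>spectrum U. \<nu>^2 = \<mu>'^3" if "\<mu>' \<in> spectrum U" for \<mu>'
  proof -
    have "eigenvalue (U * U * U) (\<mu>'^3)" using eigenvalue_cube[OF U] that by (simp add: spectrum_def)
    then have "eigenvalue (U * U) (\<mu>'^3)"
      using eigenvalue_similar[OF mult_carrier_mat[OF U U] Vinv V inv] unfolding conj by simp
    then show ?thesis using eigenvalue_square_root[OF U] by (simp add: spectrum_def)
  qed
  show "\<mu> \<in> spectrum U" using ev by (simp add: spectrum_def)
qed

lemma exp_root_of_unity_integer: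
  fixes N :: nat and t :: real
  assumes "exp (2 * pi * \<i> * complex_of_real t) ^ N = 1"
  shows "\<exists>k::int. real N * t = of_int k"
proof -
  have angle: "of_nat N * (2 * pi * \<i> * complex_of_real t)
      = \<i> * complex_of_real (2 * pi * (real N * t))" by simp
  have "exp (of_nat N * (2 * pi * \<i> * complex_of_real t)) = 1"
    using assms by (simp add: exp_of_nat_mult)
  then have "Re (exp (\<i> * complex_of_real (2 * pi * (real N * t)))) = 1"
    unfolding angle by simp
  then have "cos (2 * pi * (real N * t)) = 1" by (simp add: Re_exp)
  then obtain k :: int where "2 * pi * (real N * t) = real_of_int k * 2 * pi"
    using cos_one_2pi_int by blast
  then have "real N * t = k" by simp
  then show ?thesis by blast
qed

lemma odd_root_of_unity_negation:
  fixes s :: "'a :: {comm_ring_1, ring_char_0}"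
  assumes "odd N" and "s ^ N = 1"
  shows "(- s) ^ N \<noteq> 1"
proof -
  have "(- s) ^ N = - 1" using assms by simp
  then show ?thesis by simp
qed

theorem mainTheorem5:
  fixes d :: nat and U V Vinv :: "complex mat"
  assumes "d \<ge> 1"
    and "unitary_mat d U" and "unitary_mat d V"
    and "Vinv \<in> carrier_mat d d" and "inverts_mat Vinv V" and "inverts_mat V Vinv"
    and "Vinv * (U * U) * V = U * U * U"
  shows "(\<forall>t::real. eigenvalue U (exp (2 * pi * \<i> * complex_of_real t))
            \<longrightarrow> (\<exists>k::int. real (N_const d) * t = of_int k))
       \<and> (\<forall>t::real. eigenvalue U (exp (2 * pi * \<i> * complex_of_real t))
            \<longrightarrow> \<not> eigenvalue U (- exp (2 * pi * \<i> * complex_of_real t)))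
       \<and> (\<forall>v \<mu>. eigenvector (U * U) v \<mu> \<longrightarrow> (\<exists>\<kappa>. eigenvector U v \<kappa>))"
proof -
  have U: "U \<in> carrier_mat d d" and adj: "mat_adjoint U * U = 1\<^sub>m d"
    using assms(2) unfolding unitary_mat_def by auto
  have adj_carrier: "mat_adjoint U \<in> carrier_mat d d" using U unfolding mat_adjoint_def by auto
  have V: "V \<in> carrier_mat d d" using assms(3) unfolding unitary_mat_def by auto
  have Vinv_V: "Vinv * V = 1\<^sub>m d" and V_Vinv: "V * Vinv = 1\<^sub>m d"
    using assms(4-6) V unfolding inverts_mat_def by auto
  have root: "\<mu> ^ N_const d = 1" if "eigenvalue U \<mu>" for \<mu>
    by (rule eigenvalue_root_of_unity[OF U adj_carrier adj V assms(4) Vinv_V V_Vinv assms(7) that])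
  have no_opposite: "\<not> eigenvalue U (- \<mu>)" if "eigenvalue U \<mu>" for \<mu>
    using odd_root_of_unity_negation[OF N_const_odd root[OF that]] root[of "- \<mu>"] by blast
  show ?thesis
  proof (intro conjI allI impI)
    fix t :: real
    assume "eigenvalue U (exp (2 * pi * \<i> * complex_of_real t))"
    then show "\<exists>k::int. real (N_const d) * t = of_int k"
      by (intro exp_root_of_unity_integer root)
  next
    fix t :: real
    assume "eigenvalue U (exp (2 * pi * \<i> * complex_of_real t))"
    then show "\<not> eigenvalue U (- exp (2 * pi * \<i> * complex_of_real t))"
      by (rule no_opposite)
  next
    fix v \<mu> assume "eigenvector (U * U) v \<mu>"
    from eigenvector_of_square[OF U this] show "\<exists>\<kappa>. eigenvector U v \<kappa>"
      using no_opposite[of "csqrt \<mu>"] by auto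
  qed
qed

end
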